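(* Consider the controlled system $\dot x = f(x)+g(x)u$, $y=h(x)$, with $x\in\mathbb{R}^{d_x}$, $u\in\mathbb{R}^{d_u}$, $y\in\mathbb{R}$, where $f,g,h$ are sufficiently many times differentiable, and let $\mathcal{S}\subset\mathbb{R}^{d_x}$ be open. Suppose that $\mathbf{H}_{d_o}$ is an immersion on $\mathcal{S}$ (e.g. the system is strongly differentially observable of order $d_o$ on $\mathcal{S}$), and that for every $i\in\{1,\dots,d_o\}$ and every $x\in\mathcal{S}$ there exist $L>0$ and a neighborhood $N$ of $x$ such that $$|L_gL_f^{i-1}h(x_a)-L_gL_f^{i-1}h(x_b)|\le L\,|\mathbf{H}_i(x_a)-\mathbf{H}_i(x_b)|\qquad\forall(x_a,x_b)\in N^2.$$ Then the system is uniformly infinitesimally observable on $\mathcal{S}$.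
   Context: $L_f$ is the Lie derivative along $f$, $L_g\alpha$ the row vector of Lie derivatives along the columns of $g$; $\mathbf{H}_i(x)=(h(x),L_fh(x),\dots,L_f^{i-1}h(x))$. Strongly differentially observable of order $d_o$ on $\mathcal{S}$: $\mathbf{H}_{d_o}$ is an injective immersion on $\mathcal{S}$. Uniform infinitesimal observability: consider the lifted system $\dot x=f(x)+g(x)u$, $\dot v=\big[\frac{\partial f}{\partial x}(x)+\frac{\partial (g u)}{\partial x}(x)\big]v$, with outputs $y=h(x)$, $w=\frac{\partial h}{\partial x}(x)v$, $v\in\mathbb{R}^{d_x}$, whose solutions are $(X_u(x,t),V_u((x,v),t))$. The system is uniformly infinitesimally observable on $\mathcal{S}$ if for any $(x,v)\in\mathcal{S}\times(\mathbb{R}^{d_x}\setminus\{0\})$, any $T>0$ and any $C^1$ function $u$ on $[0,T)$, there exists $t<T$ with $\frac{\partial h}{\partial x}(X_u(x,t))\,V_u((x,v),t)\ne0$ and $X_u(x,s)\in\mathcal{S}$ for all $s\le t$. *)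

theory Defs
  imports "HOL-Analysis.Analysis"
begin

fun Ck :: "nat \<Rightarrow> ('a::real_normed_vector \<Rightarrow> 'b::real_normed_vector) \<Rightarrow> bool" where
  "Ck 0 \<phi> = continuous_on UNIV \<phi>"
| "Ck (Suc k) \<phi> = ((\<forall>x. \<phi> differentiable (at x)) \<and>
      (\<forall>v. Ck k (\<lambda>x. frechet_derivative \<phi> (at x) v)))"

definition smooth_fun :: "('a::real_normed_vector \<Rightarrow> 'b::real_normed_vector) \<Rightarrow> bool" where
  "smooth_fun \<phi> \<longleftrightarrow> (\<forall>k. Ck k \<phi>)"

definition lie_deriv :: "(real^'n \<Rightarrow> real^'n) \<Rightarrow> (real^'n \<Rightarrow> real) \<Rightarrow> real^'n \<Rightarrow> real" where
  "lie_deriv F \<phi> x = frechet_derivative \<phi> (at x) (F x)"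

definition lie_iter :: "(real^'n \<Rightarrow> real^'n) \<Rightarrow> (real^'n \<Rightarrow> real) \<Rightarrow> nat \<Rightarrow> real^'n \<Rightarrow> real" where
  "lie_iter F \<phi> k = (lie_deriv F ^^ k) \<phi>"

text \<open>The input matrix g(x) is given by its columns g x $ j; g(x) u is the
  combination of the columns.\<close>
definition gmul :: "(real^'n \<Rightarrow> (real^'n)^'m) \<Rightarrow> real^'n \<Rightarrow> real^'m \<Rightarrow> real^'n" where
  "gmul g x w = (\<Sum>j\<in>UNIV. (w $ j) *\<^sub>R (g x $ j))"

definition lie_g :: "(real^'n \<Rightarrow> (real^'n)^'m) \<Rightarrow> (real^'n \<Rightarrow> real) \<Rightarrow> real^'n \<Rightarrow> real^'m" where
  "lie_g g \<phi> x = (\<chi> j. lie_deriv (\<lambda>z. g z $ j) \<phi> x)"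

text \<open>Euclidean distance |H_i(xa) - H_i(xb)| where
  H_i(x) = (h x, L_f h x, ..., L_f^(i-1) h x).\<close>
definition H_dist :: "(real^'n \<Rightarrow> real^'n) \<Rightarrow> (real^'n \<Rightarrow> real) \<Rightarrow> nat \<Rightarrow> real^'n \<Rightarrow> real^'n \<Rightarrow> real" where
  "H_dist F h i xa xb = sqrt (\<Sum>k<i. (lie_iter F h k xa - lie_iter F h k xb)\<^sup>2)"

definition H_immersion_on :: "(real^'n \<Rightarrow> real^'n) \<Rightarrow> (real^'n \<Rightarrow> real) \<Rightarrow> nat \<Rightarrow> (real^'n) set \<Rightarrow> bool" where
  "H_immersion_on F h d S \<longleftrightarrow>
     (\<forall>x\<in>S. (\<forall>k<d. lie_iter F h k differentiable (at x)) \<and>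
        (\<forall>v. (\<forall>k<d. frechet_derivative (lie_iter F h k) (at x) v = 0) \<longrightarrow> v = 0))"

definition C1_on_interval :: "(real \<Rightarrow> real^'m) \<Rightarrow> real \<Rightarrow> bool" where
  "C1_on_interval u T \<longleftrightarrow>
     (\<exists>D. (\<forall>s\<in>{0..<T}. (u has_vector_derivative D s) (at s within {0..<T}))
          \<and> continuous_on {0..<T} D)"

definition lifted_solution ::
  "(real^'n \<Rightarrow> real^'n) \<Rightarrow> (real^'n \<Rightarrow> (real^'n)^'m) \<Rightarrow> (real \<Rightarrow> real^'m) \<Rightarrow> real
   \<Rightarrow> real^'n \<Rightarrow> real^'n \<Rightarrow> (real \<Rightarrow> real^'n) \<Rightarrow> (real \<Rightarrow> real^'n) \<Rightarrow> bool" where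
  "lifted_solution f g u T x v X V \<longleftrightarrow>
     X 0 = x \<and> V 0 = v \<and>
     (\<forall>s\<in>{0..<T}.
        (X has_vector_derivative (f (X s) + gmul g (X s) (u s))) (at s within {0..<T}) \<and>
        (V has_vector_derivative
           (frechet_derivative f (at (X s)) (V s)
            + frechet_derivative (\<lambda>z. gmul g z (u s)) (at (X s)) (V s))) (at s within {0..<T}))"

text \<open>Uniform infinitesimal observability on S. The (unique) solution is
  quantified over every horizon T on which it exists.\<close>
definition unif_inf_observable ::
  "(real^'n \<Rightarrow> real^'n) \<Rightarrow> (real^'n \<Rightarrow> (real^'n)^'m) \<Rightarrow> (real^'n \<Rightarrow> real) \<Rightarrow> (real^'n) set \<Rightarrow> bool" where
  "unif_inf_observable f g h S \<longleftrightarrow>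
     (\<forall>x\<in>S. \<forall>v. v \<noteq> 0 \<longrightarrow> (\<forall>T>0. \<forall>u X V.
        C1_on_interval u T \<longrightarrow> lifted_solution f g u T x v X V \<longrightarrow>
        (\<exists>t\<in>{0..<T}. frechet_derivative h (at (X t)) (V t) \<noteq> 0 \<and>
                      (\<forall>s\<in>{0..t}. X s \<in> S))))"

end

theory Submission
  imports Defs
begin

text \<open>Along a solution (X, V) of the lifted system put w_k(t) = dL_f^k h(X t) V(t).
  Because second derivatives are symmetric, w_k' = w_(k+1) + \<Sum>_j u_j d(L_(g_j) L_f^k h)(X) V.
  The Lipschitz hypothesis bounds the increments of L_g L_f^k h by those of H_(k+1), so the
  input terms vanish wherever w_0, ..., w_k do. Hence if the output w_0 vanished on an initial
  interval on which X stays in S, so would w_0, ..., w_(d_o - 1); at t = 0 this says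
  dH_(d_o)(x) v = 0, which the immersion property rules out for v \<noteq> 0.\<close>

subsection \<open>Calculus of \<open>C\<^sup>k\<close> functions\<close>

lemma frechet_derivative_add_apply:
  assumes "\<phi> differentiable (at x)" "\<psi> differentiable (at x)"
  shows "frechet_derivative (\<lambda>x. \<phi> x + \<psi> x) (at x) v
       = frechet_derivative \<phi> (at x) v + frechet_derivative \<psi> (at x) v"
  using frechet_derivative_at[OF has_derivative_add[OF assms[unfolded frechet_derivative_works]]]
  by metis

lemma frechet_derivative_mult_apply:
  fixes \<phi> \<psi> :: "'a::real_normed_vector \<Rightarrow> real"
  assumes "\<phi> differentiable (at x)" "\<psi> differentiable (at x)"
  shows "frechet_derivative (\<lambda>x. \<phi> x * \<psi> x) (at x) v
       = \<phi> x * frechet_derivative \<psi> (at x) v + frechet_derivative \<phi> (at x) v * \<psi> x"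
  using frechet_derivative_at[OF has_derivative_mult[OF assms[unfolded frechet_derivative_works]]]
  by metis

lemma frechet_derivative_bounded_linear_apply:
  assumes "bounded_linear L" "F differentiable (at x)"
  shows "frechet_derivative (\<lambda>x. L (F x)) (at x) v = L (frechet_derivative F (at x) v)"
  using frechet_derivative_at[OF bounded_linear.has_derivative[OF assms(1)
        assms(2)[unfolded frechet_derivative_works]]]
  by metis

lemma Ck_Suc_imp_Ck: "Ck (Suc k) \<phi> \<Longrightarrow> Ck k \<phi>"
proof (induction k arbitrary: \<phi>)
  case 0
  then show ?case
    by (auto intro!: continuous_at_imp_continuous_on differentiable_imp_continuous_within)
qed simp

lemma Ck_const: "Ck k (\<lambda>x. c)"
  by (induction k arbitrary: c) auto

lemma Ck_add: "Ck k \<phi> \<Longrightarrow> Ck k \<psi> \<Longrightarrow> Ck k (\<lambda>x. \<phi> x + \<psi> x)"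
proof (induction k arbitrary: \<phi> \<psi>)
  case 0
  then show ?case by (auto intro: continuous_on_add)
next
  case (Suc k)
  then show ?case by (auto simp: frechet_derivative_add_apply)
qed

lemma Ck_mult:
  fixes \<phi> \<psi> :: "'a::real_normed_vector \<Rightarrow> real"
  shows "Ck k \<phi> \<Longrightarrow> Ck k \<psi> \<Longrightarrow> Ck k (\<lambda>x. \<phi> x * \<psi> x)"
proof (induction k arbitrary: \<phi> \<psi>)
  case 0
  then show ?case by (auto intro: continuous_on_mult)
next
  case (Suc k)
  then have "Ck k \<phi>" "Ck k \<psi>" by (auto intro: Ck_Suc_imp_Ck)
  with Suc show ?case by (auto simp: frechet_derivative_mult_apply intro!: Ck_add)
qed

lemma Ck_sum:
  fixes \<phi> :: "'i \<Rightarrow> 'a::real_normed_vector \<Rightarrow> real"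
  shows "finite A \<Longrightarrow> (\<And>i. i \<in> A \<Longrightarrow> Ck k (\<phi> i)) \<Longrightarrow> Ck k (\<lambda>x. \<Sum>i\<in>A. \<phi> i x)"
  by (induction A rule: finite_induct) (auto intro: Ck_add Ck_const)

lemma Ck_bounded_linear:
  assumes "bounded_linear L"
  shows "Ck k F \<Longrightarrow> Ck k (\<lambda>x. L (F x))"
proof (induction k arbitrary: F)
  case 0
  then show ?case using assms
    by (auto intro: continuous_on_compose2[of UNIV L] linear_continuous_on)
next
  case (Suc k)
  then show ?case using assms
    by (auto simp: frechet_derivative_bounded_linear_apply
        intro: differentiable_compose[of L, unfolded o_def] bounded_linear_imp_differentiable)
qed

lemma smooth_fun_differentiable: "smooth_fun \<phi> \<Longrightarrow> \<phi> differentiable (at x)"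
  unfolding smooth_fun_def by (metis Ck.simps(2))

lemma smooth_fun_column:
  fixes g :: "real^'n \<Rightarrow> (real^'n)^'m"
  assumes "smooth_fun g"
  shows "smooth_fun (\<lambda>z. g z $ j)"
  using assms Ck_bounded_linear[OF bounded_linear_vec_nth] unfolding smooth_fun_def by blast

lemma frechet_derivative_eq_sum_axis:
  fixes \<phi> :: "real^'n \<Rightarrow> real"
  assumes "\<phi> differentiable (at x)"
  shows "frechet_derivative \<phi> (at x) w
       = (\<Sum>k\<in>UNIV. w $ k * frechet_derivative \<phi> (at x) (axis k 1))"
proof -
  have lin: "linear (frechet_derivative \<phi> (at x))"
    using assms by (rule linear_frechet_derivative)
  have "frechet_derivative \<phi> (at x) w
      = frechet_derivative \<phi> (at x) (\<Sum>k\<in>UNIV. w $ k *\<^sub>R axis k 1)"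
    using basis_expansion[of w] by (simp add: scalar_mult_eq_scaleR)
  also have "\<dots> = (\<Sum>k\<in>UNIV. w $ k * frechet_derivative \<phi> (at x) (axis k 1))"
    by (simp add: linear_sum[OF lin] linear_scale[OF lin])
  finally show ?thesis .
qed

lemma Ck_lie_deriv:
  fixes \<phi> :: "real^'n \<Rightarrow> real"
  assumes "Ck k F" "Ck (Suc k) \<phi>"
  shows "Ck k (lie_deriv F \<phi>)"
proof -
  have "lie_deriv F \<phi> = (\<lambda>x. \<Sum>i\<in>UNIV. F x $ i * frechet_derivative \<phi> (at x) (axis i 1))"
    unfolding lie_deriv_def using assms(2) by (intro ext frechet_derivative_eq_sum_axis) simp
  moreover have "Ck k (\<lambda>x. F x $ i)" for i
    using assms(1) by (rule Ck_bounded_linear[OF bounded_linear_vec_nth])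
  ultimately show ?thesis
    using assms(2) by (auto intro!: Ck_sum Ck_mult)
qed

lemma smooth_fun_lie_deriv:
  fixes \<phi> :: "real^'n \<Rightarrow> real"
  assumes "smooth_fun F" "smooth_fun \<phi>"
  shows "smooth_fun (lie_deriv F \<phi>)"
  using assms unfolding smooth_fun_def by (blast intro: Ck_lie_deriv)

lemma smooth_fun_lie_iter:
  assumes "smooth_fun F" "smooth_fun \<phi>"
  shows "smooth_fun (lie_iter F \<phi> k)"
  by (induction k) (simp_all add: lie_iter_def assms smooth_fun_lie_deriv)

subsection \<open>Symmetry of second derivatives\<close>

lemma has_real_derivative_along_line:
  fixes \<phi> :: "'a::real_normed_vector \<Rightarrow> real"
  assumes "\<phi> differentiable (at (y + r *\<^sub>R a))"
  shows "((\<lambda>r. \<phi> (y + r *\<^sub>R a)) has_real_derivative frechet_derivative \<phi> (at (y + r *\<^sub>R a)) a) (at r)"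
proof -
  have "((\<lambda>r. y + r *\<^sub>R a) has_derivative (\<lambda>s. s *\<^sub>R a)) (at r)"
    by (auto intro!: derivative_eq_intros)
  from has_derivative_compose[OF this assms[unfolded frechet_derivative_works]]
  have "((\<lambda>r. \<phi> (y + r *\<^sub>R a)) has_derivative
         (\<lambda>s. frechet_derivative \<phi> (at (y + r *\<^sub>R a)) (s *\<^sub>R a))) (at r)" .
  moreover have "frechet_derivative \<phi> (at (y + r *\<^sub>R a)) (s *\<^sub>R a)
      = frechet_derivative \<phi> (at (y + r *\<^sub>R a)) a * s" for s
    using linear_scale[OF linear_frechet_derivative[OF assms]] by simp
  ultimately show ?thesis by (simp add: has_field_derivative_def)
qed

lemma second_difference_mean_value:
  fixes \<phi> :: "'a::real_normed_vector \<Rightarrow> real"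
  assumes "\<And>y. \<phi> differentiable (at y)"
    and "\<And>y. (\<lambda>y. frechet_derivative \<phi> (at y) a) differentiable (at y)"
    and "t > 0"
  obtains \<xi> \<eta> where "0 < \<xi>" "\<xi> < t" "0 < \<eta>" "\<eta> < t"
    "\<phi> (x + t *\<^sub>R a + t *\<^sub>R b) - \<phi> (x + t *\<^sub>R a) - \<phi> (x + t *\<^sub>R b) + \<phi> x
     = t * t * frechet_derivative (\<lambda>y. frechet_derivative \<phi> (at y) a) (at (x + \<xi> *\<^sub>R a + \<eta> *\<^sub>R b)) b"
proof -
  define P where "P = (\<lambda>y. frechet_derivative \<phi> (at y) a)"
  define p where "p = (\<lambda>r. \<phi> ((x + t *\<^sub>R b) + r *\<^sub>R a) - \<phi> (x + r *\<^sub>R a))"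
  have "DERIV p r :> P ((x + t *\<^sub>R b) + r *\<^sub>R a) - P (x + r *\<^sub>R a)" for r
    unfolding p_def P_def by (intro DERIV_diff has_real_derivative_along_line assms(1))
  from MVT2[OF \<open>t > 0\<close> this] obtain \<xi> where \<xi>: "0 < \<xi>" "\<xi> < t"
    "p t - p 0 = (t - 0) * (P ((x + t *\<^sub>R b) + \<xi> *\<^sub>R a) - P (x + \<xi> *\<^sub>R a))" by blast
  define q where "q = (\<lambda>r. P ((x + \<xi> *\<^sub>R a) + r *\<^sub>R b))"
  have "DERIV q r :> frechet_derivative P (at ((x + \<xi> *\<^sub>R a) + r *\<^sub>R b)) b" for r
    unfolding q_def by (intro has_real_derivative_along_line) (simp add: P_def assms(2))
  from MVT2[OF \<open>t > 0\<close> this] obtain \<eta> where \<eta>: "0 < \<eta>" "\<eta> < t"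
    "q t - q 0 = (t - 0) * frechet_derivative P (at ((x + \<xi> *\<^sub>R a) + \<eta> *\<^sub>R b)) b" by blast
  have p_eq: "p t - p 0 = \<phi> (x + t *\<^sub>R a + t *\<^sub>R b) - \<phi> (x + t *\<^sub>R a) - \<phi> (x + t *\<^sub>R b) + \<phi> x"
    unfolding p_def by (simp add: algebra_simps)
  have q_eq: "q t - q 0 = P ((x + t *\<^sub>R b) + \<xi> *\<^sub>R a) - P (x + \<xi> *\<^sub>R a)"
    unfolding q_def by (simp add: algebra_simps)
  have "\<phi> (x + t *\<^sub>R a + t *\<^sub>R b) - \<phi> (x + t *\<^sub>R a) - \<phi> (x + t *\<^sub>R b) + \<phi> x = t * (q t - q 0)"
    using \<xi>(3) p_eq q_eq by simp
  also have "\<dots> = t * t * frechet_derivative P (at (x + \<xi> *\<^sub>R a + \<eta> *\<^sub>R b)) b"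
    using \<eta>(3) by simp
  finally show ?thesis
    unfolding P_def by (rule that[OF \<xi>(1,2) \<eta>(1,2)])
qed

lemma frechet_derivative_second_symmetric:
  fixes \<phi> :: "'a::real_normed_vector \<Rightarrow> real"
  assumes "Ck 2 \<phi>"
  shows "frechet_derivative (\<lambda>y. frechet_derivative \<phi> (at y) a) (at x) b
       = frechet_derivative (\<lambda>y. frechet_derivative \<phi> (at y) b) (at x) a"
proof -
  define Q where "Q c d y = frechet_derivative (\<lambda>y. frechet_derivative \<phi> (at y) c) (at y) d" for c d y
  define C where "C = norm a + norm b"
  have d1: "\<And>y. \<phi> differentiable (at y)"
    and d2: "\<And>c y. (\<lambda>y. frechet_derivative \<phi> (at y) c) differentiable (at y)"
    and cont: "\<And>c d. isCont (Q c d) x"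
    using assms unfolding Q_def by (auto simp: numeral_2_eq_2 continuous_on_eq_continuous_at)
  have small: "norm ((x + \<xi> *\<^sub>R c + \<eta> *\<^sub>R e) - x) \<le> t * (norm c + norm e)"
    if "0 < \<xi>" "\<xi> < t" "0 < \<eta>" "\<eta> < t" for t \<xi> \<eta> and c e :: 'a
  proof -
    have "norm (\<xi> *\<^sub>R c + \<eta> *\<^sub>R e) \<le> \<xi> * norm c + \<eta> * norm e"
      using norm_triangle_ineq[of "\<xi> *\<^sub>R c" "\<eta> *\<^sub>R e"] that by simp
    also have "\<dots> \<le> t * norm c + t * norm e"
      using that by (intro add_mono mult_right_mono) auto
    finally show ?thesis by (simp add: distrib_left)
  qed
  \<comment> \<open>Both mixed derivatives are values, at nearby points, of the second difference
    quotient of \<open>\<phi>\<close>, which is symmetric in \<open>a, b\<close>.\<close>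
  have "\<exists>p p'. norm (p - x) \<le> t * C \<and> norm (p' - x) \<le> t * C \<and> Q a b p = Q b a p'"
    if t: "t > 0" for t
  proof -
    obtain \<xi> \<eta> where 1: "0 < \<xi>" "\<xi> < t" "0 < \<eta>" "\<eta> < t"
      "\<phi> (x + t *\<^sub>R a + t *\<^sub>R b) - \<phi> (x + t *\<^sub>R a) - \<phi> (x + t *\<^sub>R b) + \<phi> x
       = t * t * Q a b (x + \<xi> *\<^sub>R a + \<eta> *\<^sub>R b)"
      using second_difference_mean_value[OF d1 d2 t] unfolding Q_def by blast
    obtain \<xi>' \<eta>' where 2: "0 < \<xi>'" "\<xi>' < t" "0 < \<eta>'" "\<eta>' < t"
      "\<phi> (x + t *\<^sub>R b + t *\<^sub>R a) - \<phi> (x + t *\<^sub>R b) - \<phi> (x + t *\<^sub>R a) + \<phi> x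
       = t * t * Q b a (x + \<xi>' *\<^sub>R b + \<eta>' *\<^sub>R a)"
      using second_difference_mean_value[OF d1 d2 t] unfolding Q_def by blast
    have "t * t * Q a b (x + \<xi> *\<^sub>R a + \<eta> *\<^sub>R b) = t * t * Q b a (x + \<xi>' *\<^sub>R b + \<eta>' *\<^sub>R a)"
      using 1(5) 2(5) by (simp add: algebra_simps)
    then have "Q a b (x + \<xi> *\<^sub>R a + \<eta> *\<^sub>R b) = Q b a (x + \<xi>' *\<^sub>R b + \<eta>' *\<^sub>R a)"
      using t by simp
    moreover have "norm ((x + \<xi> *\<^sub>R a + \<eta> *\<^sub>R b) - x) \<le> t * C"
      and "norm ((x + \<xi>' *\<^sub>R b + \<eta>' *\<^sub>R a) - x) \<le> t * C"
      using small[OF 1(1-4), of a b] small[OF 2(1-4), of b a] by (simp_all add: C_def add.commute)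
    ultimately show ?thesis by blast
  qed
  then obtain P P' where P: "\<And>t. t > 0 \<Longrightarrow>
      norm (P t - x) \<le> t * C \<and> norm (P' t - x) \<le> t * C \<and> Q a b (P t) = Q b a (P' t)"
    by metis
  have ev: "\<forall>\<^sub>F t in at_right 0.
      norm (P t - x) \<le> t * C \<and> norm (P' t - x) \<le> t * C \<and> Q a b (P t) = Q b a (P' t)"
    using eventually_at_right_less[of 0] by (rule eventually_mono) (rule P)
  have lim0: "((\<lambda>t. t * C) \<longlongrightarrow> 0) (at_right 0)"
    by (auto intro!: tendsto_eq_intros)
  have "((\<lambda>t. P t - x) \<longlongrightarrow> 0) (at_right 0)" "((\<lambda>t. P' t - x) \<longlongrightarrow> 0) (at_right 0)"
    by (rule Lim_null_comparison[OF eventually_mono[OF ev] lim0], simp)+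
  then have "((\<lambda>t. Q a b (P t)) \<longlongrightarrow> Q a b x) (at_right 0)"
    and "((\<lambda>t. Q b a (P' t)) \<longlongrightarrow> Q b a x) (at_right 0)"
    by (auto intro!: isCont_tendsto_compose[OF cont] simp: LIM_zero_iff)
  moreover have "\<forall>\<^sub>F t in at_right 0. Q b a (P' t) = Q a b (P t)"
    using ev by (rule eventually_mono) simp
  ultimately have "((\<lambda>t. Q a b (P t)) \<longlongrightarrow> Q b a x) (at_right 0)"
    using tendsto_cong by fastforce
  with \<open>((\<lambda>t. Q a b (P t)) \<longlongrightarrow> Q a b x) (at_right 0)\<close> show ?thesis
    unfolding Q_def by (rule tendsto_unique[OF trivial_limit_at_right_real])
qed

lemma second_derivative_eq_sum_axis:
  fixes \<phi> :: "real^'n \<Rightarrow> real"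
  assumes "Ck 2 \<phi>"
  shows "frechet_derivative (\<lambda>y. frechet_derivative \<phi> (at y) c) (at x) d
       = (\<Sum>k\<in>UNIV. c $ k * frechet_derivative (\<lambda>y. frechet_derivative \<phi> (at y) (axis k 1)) (at x) d)"
proof -
  have "(\<lambda>y. frechet_derivative \<phi> (at y) d) differentiable (at x)"
    using assms by (simp add: numeral_2_eq_2)
  then have "frechet_derivative (\<lambda>y. frechet_derivative \<phi> (at y) d) (at x) c
      = (\<Sum>k\<in>UNIV. c $ k * frechet_derivative (\<lambda>y. frechet_derivative \<phi> (at y) d) (at x) (axis k 1))"
    by (rule frechet_derivative_eq_sum_axis)
  then show ?thesis
    by (simp only: frechet_derivative_second_symmetric[OF assms, of _ x d])
qed

lemma frechet_derivative_lie_deriv: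
  fixes \<phi> :: "real^'n \<Rightarrow> real"
  assumes "Ck 2 \<phi>" "a differentiable (at x)"
  shows "frechet_derivative (lie_deriv a \<phi>) (at x) w
       = frechet_derivative (\<lambda>y. frechet_derivative \<phi> (at y) (a x)) (at x) w
         + frechet_derivative \<phi> (at x) (frechet_derivative a (at x) w)"
proof -
  define p where "p k = (\<lambda>y. frechet_derivative \<phi> (at y) (axis k 1))" for k
  have d\<phi>: "\<And>y. \<phi> differentiable (at y)" and dp: "\<And>k y. p k differentiable (at y)"
    using assms(1) by (simp_all add: numeral_2_eq_2 p_def)
  have "lie_deriv a \<phi> = (\<lambda>y. \<Sum>k\<in>UNIV. a y $ k * p k y)"
    unfolding lie_deriv_def p_def by (intro ext frechet_derivative_eq_sum_axis d\<phi>)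
  moreover have "((\<lambda>y. a y $ k) has_derivative (\<lambda>w. frechet_derivative a (at x) w $ k)) (at x)" for k
    using bounded_linear.has_derivative[OF bounded_linear_vec_nth
        assms(2)[unfolded frechet_derivative_works]] .
  ultimately have "(lie_deriv a \<phi> has_derivative (\<lambda>w. \<Sum>k\<in>UNIV.
      a x $ k * frechet_derivative (p k) (at x) w + frechet_derivative a (at x) w $ k * p k x)) (at x)"
    using dp[unfolded frechet_derivative_works] by (auto intro!: has_derivative_sum has_derivative_mult)
  then have "frechet_derivative (lie_deriv a \<phi>) (at x) w
      = (\<Sum>k\<in>UNIV. a x $ k * frechet_derivative (p k) (at x) w)
        + (\<Sum>k\<in>UNIV. frechet_derivative a (at x) w $ k * p k x)"
    by (simp add: frechet_derivative_at[symmetric] sum.distrib)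
  also have "\<dots> = frechet_derivative (\<lambda>y. frechet_derivative \<phi> (at y) (a x)) (at x) w
         + frechet_derivative \<phi> (at x) (frechet_derivative a (at x) w)"
    unfolding p_def second_derivative_eq_sum_axis[OF assms(1), of "a x"]
      frechet_derivative_eq_sum_axis[OF d\<phi>, of _ "frechet_derivative a (at x) w"] ..
  finally show ?thesis .
qed

lemma has_vector_derivative_frechet_derivative_comp:
  fixes \<phi> :: "real^'n \<Rightarrow> real" and X V :: "real \<Rightarrow> real^'n"
  assumes "Ck 2 \<phi>"
    and "(X has_vector_derivative A) (at s within I)"
    and "(V has_vector_derivative W) (at s within I)"
  shows "((\<lambda>t. frechet_derivative \<phi> (at (X t)) (V t)) has_vector_derivative
           frechet_derivative (\<lambda>y. frechet_derivative \<phi> (at y) (V s)) (at (X s)) A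
           + frechet_derivative \<phi> (at (X s)) W) (at s within I)"
proof -
  define p where "p k = (\<lambda>y. frechet_derivative \<phi> (at y) (axis k 1))" for k
  have d\<phi>: "\<And>y. \<phi> differentiable (at y)" and dp: "\<And>k y. p k differentiable (at y)"
    using assms(1) by (simp_all add: numeral_2_eq_2 p_def)
  have "(\<lambda>t. frechet_derivative \<phi> (at (X t)) (V t)) = (\<lambda>t. \<Sum>k\<in>UNIV. V t $ k * p k (X t))"
    unfolding p_def by (intro ext frechet_derivative_eq_sum_axis d\<phi>)
  moreover have "((\<lambda>t. p k (X t)) has_derivative
      (\<lambda>r. frechet_derivative (p k) (at (X s)) (r *\<^sub>R A))) (at s within I)" for k
    using has_derivative_compose[OF assms(2)[unfolded has_vector_derivative_def]
        dp[unfolded frechet_derivative_works]] .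
  moreover have "((\<lambda>t. V t $ k) has_derivative (\<lambda>r. (r *\<^sub>R W) $ k)) (at s within I)" for k
    using bounded_linear.has_derivative[OF bounded_linear_vec_nth
        assms(3)[unfolded has_vector_derivative_def]] .
  ultimately have "((\<lambda>t. frechet_derivative \<phi> (at (X t)) (V t)) has_derivative (\<lambda>r. \<Sum>k\<in>UNIV.
      V s $ k * frechet_derivative (p k) (at (X s)) (r *\<^sub>R A) + (r *\<^sub>R W) $ k * p k (X s)))
      (at s within I)"
    by (auto intro!: has_derivative_sum has_derivative_mult)
  moreover have "(\<Sum>k\<in>UNIV.
      V s $ k * frechet_derivative (p k) (at (X s)) (r *\<^sub>R A) + (r *\<^sub>R W) $ k * p k (X s))
    = r * ((\<Sum>k\<in>UNIV. V s $ k * frechet_derivative (p k) (at (X s)) A)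
           + (\<Sum>k\<in>UNIV. W $ k * p k (X s)))" for r
    using linear_scale[OF linear_frechet_derivative[OF dp]]
    by (simp add: sum.distrib sum_distrib_left algebra_simps)
  moreover have "(\<Sum>k\<in>UNIV. V s $ k * frechet_derivative (p k) (at (X s)) A)
      + (\<Sum>k\<in>UNIV. W $ k * p k (X s))
    = frechet_derivative (\<lambda>y. frechet_derivative \<phi> (at y) (V s)) (at (X s)) A
      + frechet_derivative \<phi> (at (X s)) W"
    unfolding p_def second_derivative_eq_sum_axis[OF assms(1), of "V s"]
      frechet_derivative_eq_sum_axis[OF d\<phi>, of _ W] ..
  ultimately show ?thesis
    unfolding has_vector_derivative_def by simp
qed

lemma difference_quotient_tendsto_frechet_derivative:
  fixes \<phi> :: "'a::real_normed_vector \<Rightarrow> real"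
  assumes "\<phi> differentiable (at y)"
  shows "((\<lambda>r. (\<phi> (y + r *\<^sub>R v) - \<phi> y) / r) \<longlongrightarrow> frechet_derivative \<phi> (at y) v) (at_right 0)"
proof -
  have "((\<lambda>r. \<phi> (y + r *\<^sub>R v)) has_real_derivative frechet_derivative \<phi> (at y) v) (at 0)"
    using has_real_derivative_along_line[of \<phi> y 0 v] assms by simp
  then have "((\<lambda>r. (\<phi> (y + r *\<^sub>R v) - \<phi> y) / r) \<longlongrightarrow> frechet_derivative \<phi> (at y) v) (at 0)"
    unfolding has_field_derivative_iff by simp
  then show ?thesis
    by (rule tendsto_mono[OF at_le[OF subset_UNIV]])
qed

lemma frechet_derivative_eq_0_if_lipschitz:
  fixes \<psi> :: "real^'n \<Rightarrow> real^'m" and \<Phi> :: "nat \<Rightarrow> real^'n \<Rightarrow> real"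
  assumes "open N" "y \<in> N"
    and lip: "\<forall>xa\<in>N. \<forall>xb\<in>N. norm (\<psi> xa - \<psi> xb) \<le> L * sqrt (\<Sum>k<i. (\<Phi> k xa - \<Phi> k xb)\<^sup>2)"
    and "\<forall>k<i. \<Phi> k differentiable (at y)"
    and "\<forall>k<i. frechet_derivative (\<Phi> k) (at y) v = 0"
    and "(\<lambda>z. \<psi> z $ j) differentiable (at y)"
  shows "frechet_derivative (\<lambda>z. \<psi> z $ j) (at y) v = 0"
proof -
  define q where "q \<phi> r = (\<phi> (y + r *\<^sub>R v) - \<phi> y) / r" for \<phi> :: "real^'n \<Rightarrow> real" and r
  have lim_quotient: "((\<lambda>r. \<bar>q (\<lambda>z. \<psi> z $ j) r\<bar>) \<longlongrightarrow> \<bar>frechet_derivative (\<lambda>z. \<psi> z $ j) (at y) v\<bar>) (at_right 0)"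
    unfolding q_def using assms(6) by (intro tendsto_rabs difference_quotient_tendsto_frechet_derivative)
  have lim_bound: "((\<lambda>r. L * sqrt (\<Sum>k<i. (q (\<Phi> k) r)\<^sup>2)) \<longlongrightarrow> 0) (at_right 0)"
  proof -
    have "((\<lambda>r. L * sqrt (\<Sum>k<i. (q (\<Phi> k) r)\<^sup>2))
        \<longlongrightarrow> L * sqrt (\<Sum>k<i. (frechet_derivative (\<Phi> k) (at y) v)\<^sup>2)) (at_right 0)"
      unfolding q_def using assms(4)
      by (intro tendsto_intros difference_quotient_tendsto_frechet_derivative) auto
    then show ?thesis using assms(5) by simp
  qed
  have "\<forall>\<^sub>F r in at_right 0. \<bar>q (\<lambda>z. \<psi> z $ j) r\<bar> \<le> L * sqrt (\<Sum>k<i. (q (\<Phi> k) r)\<^sup>2)"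
  proof -
    have "((\<lambda>r. y + r *\<^sub>R v) \<longlongrightarrow> y) (at_right 0)"
      by (auto intro!: tendsto_eq_intros)
    then have "\<forall>\<^sub>F r in at_right 0. y + r *\<^sub>R v \<in> N"
      using assms(1,2) by (rule topological_tendstoD)
    with eventually_at_right_less[of 0] show ?thesis
    proof eventually_elim
      case (elim r)
      have "\<bar>q (\<lambda>z. \<psi> z $ j) r\<bar> = \<bar>(\<psi> (y + r *\<^sub>R v) - \<psi> y) $ j\<bar> / r"
        using elim by (simp add: q_def)
      also have "\<dots> \<le> norm (\<psi> (y + r *\<^sub>R v) - \<psi> y) / r"
        using elim by (intro divide_right_mono component_le_norm_cart) auto
      also have "\<dots> \<le> L * sqrt (\<Sum>k<i. (\<Phi> k (y + r *\<^sub>R v) - \<Phi> k y)\<^sup>2) / r"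
        using elim lip assms(2) by (intro divide_right_mono) auto
      also have "\<dots> = L * sqrt (\<Sum>k<i. (q (\<Phi> k) r)\<^sup>2)"
        using elim by (simp add: q_def power_divide real_sqrt_divide flip: sum_divide_distrib)
      finally show ?case .
    qed
  qed
  then have "\<bar>frechet_derivative (\<lambda>z. \<psi> z $ j) (at y) v\<bar> \<le> 0"
    by (rule tendsto_le[OF trivial_limit_at_right_real lim_bound lim_quotient])
  then show ?thesis by simp
qed

subsection \<open>Derivatives along the lifted system\<close>

lemma gmul_differentiable:
  fixes g :: "real^'n \<Rightarrow> (real^'n)^'m"
  assumes "smooth_fun g"
  shows "(\<lambda>z. gmul g z w) differentiable (at y)"
  unfolding gmul_def using smooth_fun_differentiable[OF smooth_fun_column[OF assms]]
  by (intro differentiable_sum differentiable_scaleR differentiable_const) auto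

lemma lie_deriv_control_affine:
  fixes \<phi> :: "real^'n \<Rightarrow> real"
  assumes "\<phi> differentiable (at z)"
  shows "lie_deriv (\<lambda>z. f z + gmul g z w) \<phi> z = lie_deriv f \<phi> z + (\<Sum>j\<in>UNIV. w $ j * lie_g g \<phi> z $ j)"
  using linear_frechet_derivative[OF assms]
  by (simp add: lie_deriv_def lie_g_def gmul_def linear_add linear_sum linear_scale)

lemma smooth_fun_lie_g_component:
  fixes g :: "real^'n \<Rightarrow> (real^'n)^'m"
  assumes "smooth_fun g" "smooth_fun \<phi>"
  shows "smooth_fun (\<lambda>z. lie_g g \<phi> z $ j)"
  unfolding lie_g_def using assms by (simp add: smooth_fun_lie_deriv smooth_fun_column)

lemma has_vector_derivative_variation_lie_iter:
  fixes f :: "real^'n \<Rightarrow> real^'n" and g :: "real^'n \<Rightarrow> (real^'n)^'m"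
  assumes f: "smooth_fun f" and g: "smooth_fun g" and h: "smooth_fun h"
    and sol: "lifted_solution f g u T x v X V" and t: "t \<in> {0..<T}"
  shows "((\<lambda>s. frechet_derivative (lie_iter f h k) (at (X s)) (V s)) has_vector_derivative
           frechet_derivative (lie_iter f h (Suc k)) (at (X t)) (V t)
           + (\<Sum>j\<in>UNIV. u t $ j * frechet_derivative (\<lambda>z. lie_g g (lie_iter f h k) z $ j) (at (X t)) (V t)))
         (at t within {0..<T})"
proof -
  define \<phi> where "\<phi> = lie_iter f h k"
  define a where "a z = f z + gmul g z (u t)" for z
  have \<phi>: "smooth_fun \<phi>" unfolding \<phi>_def using f h by (rule smooth_fun_lie_iter)
  have B: "\<And>j. smooth_fun (\<lambda>z. lie_g g \<phi> z $ j)"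
    using g \<phi> by (rule smooth_fun_lie_g_component)
  have fa: "\<And>y. f differentiable (at y)" "\<And>y. (\<lambda>z. gmul g z (u t)) differentiable (at y)"
    using smooth_fun_differentiable[OF f] gmul_differentiable[OF g] by auto
  then have da: "a differentiable (at (X t))"
    unfolding a_def by (intro differentiable_add)
  have "(X has_vector_derivative a (X t)) (at t within {0..<T})"
    and "(V has_vector_derivative frechet_derivative a (at (X t)) (V t)) (at t within {0..<T})"
    using sol t unfolding lifted_solution_def a_def by (auto simp: frechet_derivative_add_apply fa)
  \<comment> \<open>The second-derivative term of the chain rule is that of \<open>d(L\<^sub>a \<phi>)\<close> with its
    arguments swapped.\<close>
  from has_vector_derivative_frechet_derivative_comp[OF _ this]
  have "((\<lambda>s. frechet_derivative \<phi> (at (X s)) (V s)) has_vector_derivative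
      frechet_derivative (lie_deriv a \<phi>) (at (X t)) (V t)) (at t within {0..<T})"
    using \<phi> da unfolding smooth_fun_def
    by (simp add: frechet_derivative_lie_deriv frechet_derivative_second_symmetric)
  moreover have "lie_deriv a \<phi> = (\<lambda>z. lie_deriv f \<phi> z + (\<Sum>j\<in>UNIV. u t $ j * lie_g g \<phi> z $ j))"
    unfolding a_def using smooth_fun_differentiable[OF \<phi>] by (intro ext lie_deriv_control_affine)
  moreover have "((\<lambda>z. lie_deriv f \<phi> z + (\<Sum>j\<in>UNIV. u t $ j * lie_g g \<phi> z $ j)) has_derivative
      (\<lambda>w. frechet_derivative (lie_deriv f \<phi>) (at (X t)) w
         + (\<Sum>j\<in>UNIV. u t $ j * frechet_derivative (\<lambda>z. lie_g g \<phi> z $ j) (at (X t)) w))) (at (X t))"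
    using smooth_fun_differentiable[OF smooth_fun_lie_deriv[OF f \<phi>]] smooth_fun_differentiable[OF B]
    by (auto intro!: has_derivative_add has_derivative_sum has_derivative_mult_right
        simp: frechet_derivative_works[symmetric])
  ultimately show ?thesis
    unfolding \<phi>_def by (simp add: frechet_derivative_at[symmetric] lie_iter_def)
qed

lemma lifted_solution_initially_in_open:
  assumes "open S" "x \<in> S" "T > 0" "lifted_solution f g u T x v X V"
  obtains \<tau> where "0 < \<tau>" "\<tau> \<le> T" "\<forall>s\<in>{0..<\<tau>}. X s \<in> S"
proof -
  have X0: "X 0 = x"
    and X': "(X has_vector_derivative (f (X 0) + gmul g (X 0) (u 0))) (at 0 within {0..<T})"
    using assms(3,4) unfolding lifted_solution_def by auto
  from has_vector_derivative_continuous[OF X'] have "continuous (at 0 within {0..<T}) X" .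
  then have "(X \<longlongrightarrow> x) (at 0 within {0..<T})"
    by (simp add: continuous_within X0)
  then have "\<forall>\<^sub>F s in at 0 within {0..<T}. X s \<in> S"
    using assms(1,2) by (rule topological_tendstoD)
  then obtain d where d: "d > 0" "\<forall>s\<in>{0..<T}. s \<noteq> 0 \<and> dist s 0 < d \<longrightarrow> X s \<in> S"
    by (auto simp: eventually_at)
  show ?thesis
  proof (rule that[of "min d T"])
    show "\<forall>s\<in>{0..<min d T}. X s \<in> S"
    proof
      fix s assume "s \<in> {0..<min d T}"
      then show "X s \<in> S"
        using d X0 assms(2) by (cases "s = 0") (auto simp: dist_real_def)
    qed
  qed (use d assms(3) in auto)
qed

lemma has_vector_derivative_eq_0_if_vanishing:
  fixes w :: "real \<Rightarrow> real"
  assumes "(w has_vector_derivative D) (at t within {0..<\<tau>})" "t \<in> {0..<\<tau>}"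
    and "\<forall>s\<in>{0..<\<tau>}. w s = 0"
  shows "D = 0"
proof -
  have "t islimpt {0..<\<tau>}"
    using assms(2) by simp
  then have "at t within {0..<\<tau>} \<noteq> bot"
    using trivial_limit_within by blast
  moreover have "(w has_vector_derivative 0) (at t within {0..<\<tau>})"
    using assms(2,3) by (intro has_vector_derivative_transform[OF assms(2) _ has_vector_derivative_const]) auto
  ultimately show ?thesis
    using vector_derivative_unique_within assms(1) by blast
qed

lemma variations_lie_iter_vanish:
  fixes f :: "real^'n \<Rightarrow> real^'n" and g :: "real^'n \<Rightarrow> (real^'n)^'m" and h :: "real^'n \<Rightarrow> real"
  assumes f: "smooth_fun f" and g: "smooth_fun g" and h: "smooth_fun h"
    and sol: "lifted_solution f g u T x v X V" and "\<tau> \<le> T"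
    and in_S: "\<forall>s\<in>{0..<\<tau>}. X s \<in> S"
    and vanishing_output: "\<forall>s\<in>{0..<\<tau>}. frechet_derivative h (at (X s)) (V s) = 0"
    and lip: "\<forall>i\<in>{1..d}. \<forall>x\<in>S. \<exists>L>0. \<exists>N. open N \<and> x \<in> N \<and>
           (\<forall>xa\<in>N. \<forall>xb\<in>N.
              norm (lie_g g (lie_iter f h (i - 1)) xa - lie_g g (lie_iter f h (i - 1)) xb)
                \<le> L * H_dist f h i xa xb)"
    and "k < d"
  shows "\<forall>s\<in>{0..<\<tau>}. frechet_derivative (lie_iter f h k) (at (X s)) (V s) = 0"
proof -
  define w where "w k = (\<lambda>s. frechet_derivative (lie_iter f h k) (at (X s)) (V s))" for k
  have diff: "lie_iter f h k differentiable (at y)" for k y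
    using smooth_fun_differentiable[OF smooth_fun_lie_iter[OF f h]] .
  have "\<forall>k'\<le>k. \<forall>s\<in>{0..<\<tau>}. w k' s = 0"
    using \<open>k < d\<close>
  proof (induction k)
    case 0
    then show ?case using vanishing_output by (simp add: w_def lie_iter_def)
  next
    case (Suc k)
    have "w (Suc k) s = 0" if s: "s \<in> {0..<\<tau>}" for s
    proof -
      have IH: "\<forall>i<Suc k. frechet_derivative (lie_iter f h i) (at (X s)) (V s) = 0"
        using Suc s by (auto simp: w_def less_Suc_eq_le)
      have "Suc k \<in> {1..d}" "X s \<in> S"
        using Suc.prems in_S s by auto
      from bspec[OF bspec[OF lip this(1)] this(2)]
      obtain L N where N: "open N" "X s \<in> N" and bound: "\<forall>xa\<in>N. \<forall>xb\<in>N.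
          norm (lie_g g (lie_iter f h k) xa - lie_g g (lie_iter f h k) xb)
            \<le> L * H_dist f h (Suc k) xa xb"
        by auto
      have input_terms: "frechet_derivative (\<lambda>z. lie_g g (lie_iter f h k) z $ j) (at (X s)) (V s) = 0"
        for j
        using frechet_derivative_eq_0_if_lipschitz[OF N bound[unfolded H_dist_def] _ IH]
          smooth_fun_differentiable[OF smooth_fun_lie_g_component[OF g smooth_fun_lie_iter[OF f h]]]
          diff by blast
      have "{0..<\<tau>} \<subseteq> {0..<T}" "s \<in> {0..<T}"
        using s \<open>\<tau> \<le> T\<close> by auto
      from has_vector_derivative_within_subset[OF
          has_vector_derivative_variation_lie_iter[OF f g h sol this(2), of k] this(1)]
      have "(w k has_vector_derivative w (Suc k) s) (at s within {0..<\<tau>})"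
        by (simp add: w_def input_terms)
      moreover have "\<forall>s\<in>{0..<\<tau>}. w k s = 0"
        using Suc by simp
      ultimately show ?thesis
        by (rule has_vector_derivative_eq_0_if_vanishing[OF _ s])
    qed
    with Suc show ?case by (auto simp: le_Suc_eq)
  qed
  then show ?thesis by (simp add: w_def)
qed

theorem proposition5:
  fixes f :: "real^'n::finite \<Rightarrow> real^'n"
    and g :: "real^'n \<Rightarrow> (real^'n)^'m::finite"
    and h :: "real^'n \<Rightarrow> real"
    and S :: "(real^'n) set"
    and d\<^sub>o :: nat
  assumes "smooth_fun f" and "smooth_fun g" and "smooth_fun h"
    and "open S"
    and "H_immersion_on f h d\<^sub>o S"
    and "\<forall>i\<in>{1..d\<^sub>o}. \<forall>x\<in>S. \<exists>L>0. \<exists>N. open N \<and> x \<in> N \<and>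
           (\<forall>xa\<in>N. \<forall>xb\<in>N.
              norm (lie_g g (lie_iter f h (i - 1)) xa - lie_g g (lie_iter f h (i - 1)) xb)
                \<le> L * H_dist f h i xa xb)"
  shows "unif_inf_observable f g h S"
  unfolding unif_inf_observable_def
proof (intro ballI allI impI)
  fix x v T u X V
  assume "x \<in> S" "v \<noteq> 0" "T > 0" "C1_on_interval u T"
    and sol: "lifted_solution f g u T x v X V"
  obtain \<tau> where \<tau>: "0 < \<tau>" "\<tau> \<le> T" "\<forall>s\<in>{0..<\<tau>}. X s \<in> S"
    using lifted_solution_initially_in_open[OF assms(4) \<open>x \<in> S\<close> \<open>T > 0\<close> sol] .
  show "\<exists>t\<in>{0..<T}. frechet_derivative h (at (X t)) (V t) \<noteq> 0 \<and> (\<forall>s\<in>{0..t}. X s \<in> S)"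
  proof (rule ccontr)
    assume no_witness: "\<not> ?thesis"
    have "\<forall>s\<in>{0..<\<tau>}. frechet_derivative h (at (X s)) (V s) = 0"
    proof
      fix s assume "s \<in> {0..<\<tau>}"
      with \<tau> have "s \<in> {0..<T}" "\<forall>s'\<in>{0..s}. X s' \<in> S"
        by auto
      with no_witness show "frechet_derivative h (at (X s)) (V s) = 0"
        by blast
    qed
    from variations_lie_iter_vanish[OF assms(1-3) sol \<tau>(2,3) this assms(6)]
    have "\<forall>k<d\<^sub>o. frechet_derivative (lie_iter f h k) (at x) v = 0"
      using \<tau>(1) sol by (auto simp: lifted_solution_def)
    with assms(5) \<open>x \<in> S\<close> have "v = 0"
      unfolding H_immersion_on_def by blast
    with \<open>v \<noteq> 0\<close> show False ..
  qed
qed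

end
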